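(* Let $\mu_1<\mu_2$, $\alpha_0,\beta_0>0$, and let $G$ be the distribution of $(x,y)$ on $\mathbb{R}\times\{-1,+1\}$ with $y$ uniform on $\{-1,+1\}$, $x\mid y=-1\sim\mathrm{N}(\mu_1,\alpha_0,\beta_0)$, $x\mid y=+1\sim\mathrm{N}(\mu_2,\alpha_0,\beta_0)$. For $\theta\in\mathbb{R}$ let $f_\theta(x)=\mathrm{sign}(x+\theta)$, $\mathcal{L}(f_\theta)=\Pr_{(x,y)\sim G}[f_\theta(x)\ne y]$, and $\theta^\star=-\frac{\mu_1+\mu_2}{2}$. Then: (i) there is a constant $C_1'>0$ depending only on $\mu_1,\mu_2,\alpha_0,\beta_0$ with $\mathcal{L}(f_\theta)-\mathcal{L}(f_{\theta^\star})\le C_1'|\theta-\theta^\star|$ for all $\theta$; (ii) $\epsilon_0:=\mathbb{E}_{(x,y)\sim G}|x-y+\theta^\star|-\mathbb{E}_{(x,y)\sim G}|x-f_{\theta^\star}(x)+\theta^\star|>0$; (iii) for $\rho\in[0,1]$, let $G'_\rho$ be the distribution of $(x,y')$ where $(x,y)\sim G$ and $y'=\rho f_{\theta^\star}(x)+(1-\rho)y$. Fix $\theta_0\in\mathbb{R}$, $\eta\in(0,1)$, let $(x_t,y'_t)_{t\ge0}$ be i.i.d. from $G'_\rho$, and set $\theta_{t+1}=\theta_t-\eta(\theta_t+x_t-y'_t)$. Then for every $t\in\mathbb{N}$, $$\mathbb{E}\big[\mathcal{L}(f_{\theta_t})\big]-\mathcal{L}(f_{\theta^\star})\le C_2(1-\eta)^t+\big(1-(1-\eta)^t\big)\big(C_3-C_4\rho\big),$$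 where $C_2=C_1'|\theta_0-\theta^\star|$, $C_3=C_1'\,\mathbb{E}_{(x,y)\sim G}|x-y+\theta^\star|$ and $C_4=C_1'\epsilon_0>0$. In particular the bound is strictly decreasing in $\rho$ whenever $t\ge1$.
   Context: $\mathrm{N}(\mu,\alpha,\beta)$ denotes the generalized Gaussian distribution on $\mathbb{R}$ with density $\frac{\beta}{2\alpha\Gamma(1/\beta)}e^{-(|x-\mu|/\alpha)^\beta}$. The expectation is over the random samples; $\theta_0$ is deterministic. The value of $\mathrm{sign}(0)$ is irrelevant (a null event). *)

theory Defs
  imports "HOL-Probability.Probability"
begin

definition gg_density :: "real \<Rightarrow> real \<Rightarrow> real \<Rightarrow> real \<Rightarrow> real" where
  "gg_density mu alpha beta x =
     beta / (2 * alpha * Gamma (1 / beta)) * exp (- ((\<bar>x - mu\<bar> / alpha) powr beta))"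

definition gg_measure :: "real \<Rightarrow> real \<Rightarrow> real \<Rightarrow> real measure" where
  "gg_measure mu alpha beta = density lborel (\<lambda>x. ennreal (gg_density mu alpha beta x))"

definition G_joint :: "real \<Rightarrow> real \<Rightarrow> real \<Rightarrow> real \<Rightarrow> (real \<times> real) measure" where
  "G_joint mu1 mu2 alpha beta =
     Giry_Monad.bind (measure_pmf (pmf_of_set {-1, 1::real}))
       (\<lambda>y. distr (gg_measure (if y = -1 then mu1 else mu2) alpha beta)
                   (borel \<Otimes>\<^sub>M borel) (\<lambda>x. (x, y)))"

text \<open>Classifier f_theta(x) = sign(x + theta) (sgn 0 = 0, a null event).\<close>
definition clf :: "real \<Rightarrow> real \<Rightarrow> real" where
  "clf theta x = sgn (x + theta)"

definition loss :: "(real \<times> real) measure \<Rightarrow> real \<Rightarrow> real" where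
  "loss G theta = measure G {p. clf theta (fst p) \<noteq> snd p}"

fun sgd_iter :: "real \<Rightarrow> real \<Rightarrow> (nat \<Rightarrow> 'a \<Rightarrow> real) \<Rightarrow> (nat \<Rightarrow> 'a \<Rightarrow> real) \<Rightarrow> nat \<Rightarrow> 'a \<Rightarrow> real" where
  "sgd_iter eta theta0 X Y' 0 \<omega> = theta0"
| "sgd_iter eta theta0 X Y' (Suc t) \<omega> =
     sgd_iter eta theta0 X Y' t \<omega> - eta * (sgd_iter eta theta0 X Y' t \<omega> + X t \<omega> - Y' t \<omega>)"

end

theory Submission
  imports Defs
begin

text \<open>The loss of \<open>f_theta\<close> is the average of two generalized-Gaussian tail probabilities whose
  densities are bounded by their peak value \<open>beta / (2 alpha Gamma (1 / beta))\<close>, so the loss is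
  Lipschitz with this constant \<open>C1'\<close>. One SGD step contracts the distance to \<open>theta*\<close> up to noise,
  \<open>|theta_{t+1} - theta*| \<le> (1 - eta) |theta_t - theta*| + eta |x_t - y'_t + theta*|\<close>, and by
  convexity of \<open>|.|\<close> the noise has mean at most \<open>rho B + (1 - rho) A = A - rho eps0\<close>, where \<open>A\<close>
  and \<open>B\<close> are the two expectations defining \<open>eps0\<close>; unrolling the recursion and applying the
  Lipschitz bound gives (iii). Finally \<open>eps0 > 0\<close> because \<open>sgn z\<close> is a point of \<open>{-1, 1}\<close>
  nearest to \<open>z\<close>, strictly nearer than \<open>-1\<close> when \<open>z \<ge> 1\<close>, an event of positive probability.\<close>

section \<open>Generalized Gaussian distributions\<close>

lemma Gamma_integral_real':
  assumes "s > (0::real)"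
  shows "((\<lambda>t. t powr (s - 1) / exp t) has_integral Gamma s) {0<..}"
proof -
  have "((\<lambda>t. t powr (s - 1) / exp t) has_integral Gamma s) {0..}"
    by (rule Gamma_integral_real) fact
  hence "((\<lambda>t. if t \<in> {0<..} then t powr (s - 1) / exp t else 0) has_integral Gamma s) {0..}"
    by (rule has_integral_spike [of "{0}", rotated 2]) auto
  also have "?this = ?thesis"
    by (subst has_integral_restrict) auto
  finally show ?thesis .
qed

text \<open>Substituting \<open>t = (c (x - mu) / alpha) powr beta\<close> turns the integral over the half-line
  \<open>c (x - mu) > 0\<close> into a Gamma integral.\<close>
lemma gg_moment_has_integral_halfline:
  fixes mu alpha beta k c :: real
  assumes a: "alpha > 0" and b: "beta > 0" and k: "k \<ge> 0" and c: "c = 1 \<or> c = -1"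
  shows "((\<lambda>x. \<bar>x - mu\<bar> powr k * exp (- ((\<bar>x - mu\<bar> / alpha) powr beta)))
          has_integral alpha powr (k + 1) / beta * Gamma ((k + 1) / beta)) {x. 0 < c * (x - mu)}"
proof -
  define S where "S = {x. 0 < c * (x - mu)}"
  define s where "s = (k + 1) / beta"
  have s: "s > 0" using b k by (simp add: s_def)
  define g where "g x = (c * (x - mu) / alpha) powr beta" for x
  define g' where "g' x = c * beta / alpha * (c * (x - mu) / alpha) powr (beta - 1)" for x
  define f where "f t = t powr (s - 1) / exp t" for t
  have cc: "c * c = 1" and abs_c: "\<bar>c\<bar> = 1" using c by auto
  have S_lebesgue: "S \<in> sets lebesgue" unfolding S_def using c by auto
  have g_deriv: "(g has_field_derivative g' x) (at x within S)" if "x \<in> S" for x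
  proof -
    have "c * (x - mu) / alpha > 0" using that a by (auto simp: S_def)
    hence "(g has_field_derivative beta * (c * (x - mu) / alpha) powr (beta - 1) * (c / alpha)) (at x)"
      unfolding g_def by (auto intro!: derivative_eq_intros simp: field_simps)
    thus ?thesis unfolding g'_def by (auto intro: has_field_derivative_at_within simp: field_simps)
  qed
  have g_inj: "inj_on g S"
  proof (rule inj_onI)
    fix x y assume xy: "x \<in> S" "y \<in> S" "g x = g y"
    hence "((c * (x - mu) / alpha) powr beta) powr (1 / beta) = ((c * (y - mu) / alpha) powr beta) powr (1 / beta)"
      by (simp add: g_def)
    hence "c * (x - mu) / alpha = c * (y - mu) / alpha"
      using a b xy by (simp add: S_def powr_powr)
    hence "c * c * (x - mu) = c * c * (y - mu)" using a by (simp add: field_simps)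
    thus "x = y" using cc by simp
  qed
  have g_image: "g ` S = {0<..}"
  proof
    show "g ` S \<subseteq> {0<..}" using a by (auto simp: S_def g_def)
    show "{0<..} \<subseteq> g ` S"
    proof
      fix t :: real assume t: "t \<in> {0<..}"
      define x where "x = mu + c * alpha * t powr (1 / beta)"
      have "c * (x - mu) = alpha * t powr (1 / beta)" using cc by (simp add: x_def algebra_simps)
      hence "x \<in> S" and "g x = t" using a b t by (auto simp: S_def g_def powr_powr)
      thus "t \<in> g ` S" by force
    qed
  qed
  have Gamma_int: "(f has_integral Gamma s) {0<..}"
    using Gamma_integral_real'[OF s] unfolding f_def .
  have "f absolutely_integrable_on {0<..} \<and> integral {0<..} f = Gamma s"
    using Gamma_int by (auto intro: nonnegative_absolutely_integrable_1 has_integral_integrable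
                             simp: f_def integral_unique)
  hence "(\<lambda>x. \<bar>g' x\<bar> * f (g x)) absolutely_integrable_on S \<and>
         integral S (\<lambda>x. \<bar>g' x\<bar> * f (g x)) = Gamma s"
    using has_absolute_integral_change_of_variables_1'[OF S_lebesgue g_deriv g_inj, of f "Gamma s"]
    unfolding g_image by blast
  hence subst: "((\<lambda>x. \<bar>g' x\<bar> * f (g x)) has_integral Gamma s) S"
    using set_lebesgue_integral_eq_integral(1) integrable_integral by metis
  have integrand: "\<bar>x - mu\<bar> powr k * exp (- ((\<bar>x - mu\<bar> / alpha) powr beta))
      = alpha powr (k + 1) / beta * (\<bar>g' x\<bar> * f (g x))" if "x \<in> S" for x
  proof -
    have ab: "c * (x - mu) = \<bar>x - mu\<bar>" using that c by (auto simp: S_def)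
    let ?u = "\<bar>x - mu\<bar> / alpha"
    have u: "?u > 0" using that ab a by (auto simp: S_def)
    have "\<bar>g' x\<bar> * f (g x) = beta / alpha * (?u powr (beta - 1) * (?u powr beta) powr (s - 1)) / exp (?u powr beta)"
      using ab a b u abs_c by (simp add: g'_def f_def g_def abs_mult)
    also have "?u powr (beta - 1) * (?u powr beta) powr (s - 1) = ?u powr k"
      using b u by (simp add: powr_powr s_def powr_add[symmetric] field_simps)
    also have "?u powr k = \<bar>x - mu\<bar> powr k / alpha powr k"
      using a u by (simp add: powr_divide)
    finally show ?thesis
      using a b by (simp add: powr_add exp_minus field_simps)
  qed
  have "((\<lambda>x. \<bar>x - mu\<bar> powr k * exp (- ((\<bar>x - mu\<bar> / alpha) powr beta)))
          has_integral alpha powr (k + 1) / beta * Gamma s) S"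
    by (rule has_integral_eq[rotated, OF has_integral_mult_right[OF subst]]) (simp add: integrand)
  thus ?thesis by (simp add: S_def s_def)
qed

text \<open>Since \<open>0 powr 0 = 0\<close>, the integrand is only prescribed off \<open>mu\<close>.\<close>
lemma gg_moment_has_integral:
  fixes mu alpha beta k :: real
  assumes a: "alpha > 0" and b: "beta > 0" and k: "k \<ge> 0"
    and h: "\<And>x. x \<noteq> mu \<Longrightarrow> h x = \<bar>x - mu\<bar> powr k * exp (- ((\<bar>x - mu\<bar> / alpha) powr beta))"
  shows "(h has_integral 2 * (alpha powr (k + 1) / beta * Gamma ((k + 1) / beta))) UNIV"
proof -
  let ?I = "alpha powr (k + 1) / beta * Gamma ((k + 1) / beta)"
  have right: "(h has_integral ?I) {x. 0 < 1 * (x - mu)}"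
    by (rule has_integral_eq[rotated, OF gg_moment_has_integral_halfline[OF a b k]]) (use h in auto)
  have left: "(h has_integral ?I) {x. 0 < (-1) * (x - mu)}"
    by (rule has_integral_eq[rotated, OF gg_moment_has_integral_halfline[OF a b k]]) (use h in auto)
  have "(h has_integral (?I + ?I)) ({x. 0 < 1 * (x - mu)} \<union> {x. 0 < (-1) * (x - mu)})"
    by (rule has_integral_Un[OF right left]) (auto intro: negligible_subset[OF negligible_empty])
  moreover have "{x. 0 < 1 * (x - mu)} \<union> {x. 0 < (-1) * (x - mu)} = UNIV - {mu}" by auto
  ultimately have "(h has_integral (?I + ?I)) (UNIV - {mu})" by simp
  hence "(h has_integral (?I + ?I)) UNIV"
    by (rule has_integral_spike_set_eq[THEN iffD1, rotated 2])
       (auto intro: negligible_subset[OF negligible_sing[of mu]])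
  thus ?thesis by simp
qed

definition gg_peak :: "real \<Rightarrow> real \<Rightarrow> real" where
  "gg_peak alpha beta = beta / (2 * alpha * Gamma (1 / beta))"

lemma gg_peak_pos: "alpha > 0 \<Longrightarrow> beta > 0 \<Longrightarrow> gg_peak alpha beta > 0"
  unfolding gg_peak_def by (intro divide_pos_pos mult_pos_pos Gamma_real_pos) auto

lemma gg_density_eq: "gg_density mu alpha beta x = gg_peak alpha beta * exp (- ((\<bar>x - mu\<bar> / alpha) powr beta))"
  unfolding gg_density_def gg_peak_def by simp

lemma gg_density_pos: "alpha > 0 \<Longrightarrow> beta > 0 \<Longrightarrow> gg_density mu alpha beta x > 0"
  unfolding gg_density_eq using gg_peak_pos by simp

lemma gg_density_le_peak: "alpha > 0 \<Longrightarrow> beta > 0 \<Longrightarrow> gg_density mu alpha beta x \<le> gg_peak alpha beta"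
  unfolding gg_density_eq using gg_peak_pos[of alpha beta] by (simp add: mult_le_cancel_left1)

lemma borel_measurable_gg_density[measurable]: "gg_density mu alpha beta \<in> borel_measurable borel"
  unfolding gg_density_def by measurable

lemma sets_gg_measure[simp, measurable_cong]: "sets (gg_measure mu alpha beta) = sets borel"
  unfolding gg_measure_def by simp

lemma space_gg_measure[simp]: "space (gg_measure mu alpha beta) = UNIV"
  unfolding gg_measure_def by simp

lemma gg_density_moment_has_integral:
  assumes a: "alpha > 0" and b: "beta > 0" and k: "k \<ge> 0"
  shows "((\<lambda>x. gg_density mu alpha beta x * \<bar>x - mu\<bar> powr k) has_integral
          gg_peak alpha beta * (2 * (alpha powr (k + 1) / beta * Gamma ((k + 1) / beta)))) UNIV"
proof -
  have "((\<lambda>x. \<bar>x - mu\<bar> powr k * exp (- ((\<bar>x - mu\<bar> / alpha) powr beta)))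
          has_integral 2 * (alpha powr (k + 1) / beta * Gamma ((k + 1) / beta))) UNIV"
    by (rule gg_moment_has_integral[OF a b k]) simp
  from has_integral_mult_right[OF this, where c="gg_peak alpha beta"] show ?thesis
    by (simp add: gg_density_eq mult_ac)
qed

lemma gg_density_has_integral:
  assumes a: "alpha > 0" and b: "beta > 0"
  shows "(gg_density mu alpha beta has_integral 1) UNIV"
proof -
  define I where "I = 2 * (alpha powr (0 + 1) / beta * Gamma ((0 + 1) / beta))"
  have "((\<lambda>x. exp (- ((\<bar>x - mu\<bar> / alpha) powr beta))) has_integral I) UNIV"
    unfolding I_def by (rule gg_moment_has_integral[OF a b order_refl, where mu=mu]) simp
  hence "((\<lambda>x. gg_peak alpha beta * exp (- ((\<bar>x - mu\<bar> / alpha) powr beta)))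
           has_integral gg_peak alpha beta * I) UNIV"
    by (rule has_integral_mult_right)
  moreover have "Gamma (1 / beta) > 0" using b by (intro Gamma_real_pos) simp
  hence "gg_peak alpha beta * I = 1"
    using a b unfolding gg_peak_def I_def by (simp add: field_simps less_imp_neq[symmetric])
  ultimately show ?thesis by (simp only: gg_density_eq[abs_def])
qed

lemma prob_space_gg_measure:
  assumes a: "alpha > 0" and b: "beta > 0"
  shows "prob_space (gg_measure mu alpha beta)"
proof
  have "(\<integral>\<^sup>+x. ennreal (gg_density mu alpha beta x) \<partial>lborel) = 1"
    using nn_integral_has_integral_lebesgue'[OF _ gg_density_has_integral[OF a b]]
          gg_density_pos[OF a b] by (simp add: less_imp_le)
  thus "emeasure (gg_measure mu alpha beta) (space (gg_measure mu alpha beta)) = 1"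
    by (simp add: gg_measure_def emeasure_density)
qed

lemma integrable_gg_measure_abs:
  assumes a: "alpha > 0" and b: "beta > 0"
  shows "integrable (gg_measure mu alpha beta) (\<lambda>x. \<bar>x - c\<bar>)"
proof -
  interpret prob_space "gg_measure mu alpha beta" using prob_space_gg_measure[OF a b] .
  have "(\<integral>\<^sup>+x. ennreal \<bar>x - mu\<bar> \<partial>gg_measure mu alpha beta)
      = (\<integral>\<^sup>+x. ennreal (gg_density mu alpha beta x * \<bar>x - mu\<bar> powr 1) \<partial>lborel)"
    unfolding gg_measure_def
    by (simp add: nn_integral_density gg_density_pos[OF a b] less_imp_le ennreal_mult'[symmetric])
  also have "\<dots> < \<infinity>"
    using nn_integral_has_integral_lebesgue'[OF _ gg_density_moment_has_integral[OF a b zero_le_one, where mu=mu]]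
          gg_density_pos[OF a b, of mu] by (simp add: less_imp_le)
  finally have "integrable (gg_measure mu alpha beta) (\<lambda>x. x - mu)"
    by (intro integrableI_bounded) simp_all
  hence "integrable (gg_measure mu alpha beta) (\<lambda>x. \<bar>(x - mu) + (mu - c)\<bar>)"
    by (intro integrable_abs Bochner_Integration.integrable_add) auto
  thus ?thesis by simp
qed

lemma measure_gg_measure_interval_le:
  assumes a: "alpha > 0" and b: "beta > 0" and rs: "r \<le> s"
  shows "measure (gg_measure mu alpha beta) {r..s} \<le> gg_peak alpha beta * (s - r)"
proof -
  interpret prob_space "gg_measure mu alpha beta" using prob_space_gg_measure[OF a b] .
  have "emeasure (gg_measure mu alpha beta) {r..s}
      = (\<integral>\<^sup>+x. ennreal (gg_density mu alpha beta x) * indicator {r..s} x \<partial>lborel)"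
    unfolding gg_measure_def by (simp add: emeasure_density)
  also have "\<dots> \<le> (\<integral>\<^sup>+x. ennreal (gg_peak alpha beta) * indicator {r..s} x \<partial>lborel)"
    by (intro nn_integral_mono mult_right_mono ennreal_leI gg_density_le_peak[OF a b]) simp
  also have "\<dots> = ennreal (gg_peak alpha beta * (s - r))"
    using rs gg_peak_pos[OF a b] by (simp add: nn_integral_cmult_indicator ennreal_mult)
  finally show ?thesis
    using rs gg_peak_pos[OF a b] by (simp add: emeasure_eq_measure ennreal_le_iff)
qed

lemma emeasure_gg_measure_atLeast_pos:
  assumes a: "alpha > 0" and b: "beta > 0"
  shows "emeasure (gg_measure mu alpha beta) {r..} > 0"
proof (rule ccontr)
  assume "\<not> emeasure (gg_measure mu alpha beta) {r..} > 0"
  hence "(\<integral>\<^sup>+x. ennreal (gg_density mu alpha beta x) * indicator {r..} x \<partial>lborel) = 0"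
    unfolding gg_measure_def by (simp add: emeasure_density)
  hence "AE x in lborel. ennreal (gg_density mu alpha beta x) * indicator {r..} x = 0"
    by (subst (asm) nn_integral_0_iff_AE) simp_all
  hence "AE x in lborel. x \<notin> {r..}"
    by eventually_elim (use gg_density_pos[OF a b] in \<open>auto simp: indicator_def less_imp_neq[symmetric]\<close>)
  hence "{r..} \<in> null_sets lborel"
    by (subst AE_iff_null_sets) simp_all
  moreover have "emeasure lborel {r..r + 1} \<le> emeasure lborel {r..}"
    by (intro emeasure_mono) auto
  ultimately show False by (simp add: null_sets_def)
qed

lemma lipschitz_gg_measure_atLeast:
  assumes a: "alpha > 0" and b: "beta > 0"
  shows "(gg_peak alpha beta)-lipschitz_on UNIV (\<lambda>r. measure (gg_measure mu alpha beta) {r..})"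
proof (rule lipschitz_on_leI)
  interpret prob_space "gg_measure mu alpha beta" using prob_space_gg_measure[OF a b] .
  fix r s :: real assume rs: "r \<le> s"
  have "measure (gg_measure mu alpha beta) {r..} - measure (gg_measure mu alpha beta) {s..}
      = measure (gg_measure mu alpha beta) ({r..} - {s..})"
    using rs by (intro finite_measure_Diff[symmetric]) auto
  also have "\<dots> \<le> measure (gg_measure mu alpha beta) {r..s}"
    by (intro finite_measure_mono) auto
  also have "\<dots> \<le> gg_peak alpha beta * (s - r)"
    by (rule measure_gg_measure_interval_le[OF a b rs])
  finally show "dist (measure (gg_measure mu alpha beta) {r..}) (measure (gg_measure mu alpha beta) {s..})
      \<le> gg_peak alpha beta * dist r s"
    using rs finite_measure_mono[of "{s..}" "{r..}"] by (simp add: dist_real_def)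
qed (use gg_peak_pos[OF a b] in simp)

lemma lipschitz_gg_measure_atMost:
  assumes a: "alpha > 0" and b: "beta > 0"
  shows "(gg_peak alpha beta)-lipschitz_on UNIV (\<lambda>r. measure (gg_measure mu alpha beta) {..r})"
proof (rule lipschitz_on_leI)
  interpret prob_space "gg_measure mu alpha beta" using prob_space_gg_measure[OF a b] .
  fix r s :: real assume rs: "r \<le> s"
  have "measure (gg_measure mu alpha beta) {..s} - measure (gg_measure mu alpha beta) {..r}
      = measure (gg_measure mu alpha beta) ({..s} - {..r})"
    using rs by (intro finite_measure_Diff[symmetric]) auto
  also have "\<dots> \<le> measure (gg_measure mu alpha beta) {r..s}"
    by (intro finite_measure_mono) auto
  also have "\<dots> \<le> gg_peak alpha beta * (s - r)"
    by (rule measure_gg_measure_interval_le[OF a b rs])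
  finally show "dist (measure (gg_measure mu alpha beta) {..r}) (measure (gg_measure mu alpha beta) {..s})
      \<le> gg_peak alpha beta * dist r s"
    using rs finite_measure_mono[of "{..r}" "{..s}"] by (simp add: dist_real_def)
qed (use gg_peak_pos[OF a b] in simp)

section \<open>The labelled mixture\<close>

lemma measurable_G_joint_kernel:
  assumes a: "alpha > 0" and b: "beta > 0"
  shows "(\<lambda>y. distr (gg_measure (if y = -1 then mu1 else mu2) alpha beta)
                   (borel \<Otimes>\<^sub>M borel) (\<lambda>x. (x, y::real)))
       \<in> measurable (measure_pmf (pmf_of_set {-1, 1::real})) (subprob_algebra (borel \<Otimes>\<^sub>M borel))"
proof -
  have "distr (gg_measure mu alpha beta) (borel \<Otimes>\<^sub>M borel) (\<lambda>x. (x, y::real))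
          \<in> space (subprob_algebra (borel \<Otimes>\<^sub>M borel))" for mu y
  proof -
    interpret prob_space "gg_measure mu alpha beta" using prob_space_gg_measure[OF a b] .
    have "prob_space (distr (gg_measure mu alpha beta) (borel \<Otimes>\<^sub>M borel) (\<lambda>x. (x, y::real)))"
      by (rule prob_space_distr) measurable
    thus ?thesis by (auto simp: space_subprob_algebra intro: prob_space_imp_subprob_space)
  qed
  thus ?thesis by simp
qed

lemma nn_integral_G_joint:
  assumes a: "alpha > 0" and b: "beta > 0" and f[measurable]: "f \<in> borel_measurable (borel \<Otimes>\<^sub>M borel)"
  shows "(\<integral>\<^sup>+p. f p \<partial>G_joint mu1 mu2 alpha beta) =
     ((\<integral>\<^sup>+x. f (x, -1) \<partial>gg_measure mu1 alpha beta) + (\<integral>\<^sup>+x. f (x, 1) \<partial>gg_measure mu2 alpha beta)) / 2"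
  unfolding G_joint_def
  by (subst nn_integral_bind[OF f measurable_G_joint_kernel[OF a b]])
     (simp add: nn_integral_pmf_of_set nn_integral_distr)

lemma sets_G_joint[simp, measurable_cong]:
  assumes a: "alpha > 0" and b: "beta > 0"
  shows "sets (G_joint mu1 mu2 alpha beta) = sets (borel \<Otimes>\<^sub>M borel)"
  unfolding G_joint_def by (rule sets_bind_measurable[OF measurable_G_joint_kernel[OF a b]]) simp

lemma space_G_joint[simp]:
  assumes a: "alpha > 0" and b: "beta > 0"
  shows "space (G_joint mu1 mu2 alpha beta) = UNIV"
  using sets_eq_imp_space_eq[OF sets_G_joint[OF a b]] by (simp add: space_pair_measure)

lemma borel_measurable_G_joint:
  assumes a: "alpha > 0" and b: "beta > 0" and f: "f \<in> borel_measurable (borel \<Otimes>\<^sub>M borel)"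
  shows "f \<in> borel_measurable (G_joint mu1 mu2 alpha beta)"
  by (subst measurable_cong_sets[OF sets_G_joint[OF a b] refl]) (rule f)

lemma emeasure_G_joint:
  assumes a: "alpha > 0" and b: "beta > 0" and A: "A \<in> sets (borel \<Otimes>\<^sub>M borel)"
  shows "emeasure (G_joint mu1 mu2 alpha beta) A =
     (emeasure (gg_measure mu1 alpha beta) {x. (x, -1) \<in> A} + emeasure (gg_measure mu2 alpha beta) {x. (x, 1) \<in> A}) / 2"
proof -
  have slice: "{x. (x, y) \<in> A} \<in> sets borel" for y :: real
  proof -
    have "(\<lambda>x. (x, y)) \<in> borel \<rightarrow>\<^sub>M borel \<Otimes>\<^sub>M borel" by measurable
    from measurable_sets[OF this A] show ?thesis by (simp add: vimage_def)
  qed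
  have indicator_slice: "(indicator A (x, y) :: ennreal) = indicator {x. (x, y) \<in> A} x" for x y :: real
    by (simp add: indicator_def)
  have "emeasure (G_joint mu1 mu2 alpha beta) A = (\<integral>\<^sup>+p. indicator A p \<partial>G_joint mu1 mu2 alpha beta)"
    using A by (simp add: a b)
  also have "\<dots> = ((\<integral>\<^sup>+x. indicator A (x, -1) \<partial>gg_measure mu1 alpha beta)
                  + (\<integral>\<^sup>+x. indicator A (x, 1) \<partial>gg_measure mu2 alpha beta)) / 2"
    by (rule nn_integral_G_joint[OF a b]) (use A in measurable)
  finally show ?thesis unfolding indicator_slice using slice by simp
qed

lemma prob_space_G_joint:
  assumes a: "alpha > 0" and b: "beta > 0"
  shows "prob_space (G_joint mu1 mu2 alpha beta)"
proof
  have "UNIV \<in> sets (borel \<Otimes>\<^sub>M borel :: (real \<times> real) measure)"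
    using sets.top[of "borel \<Otimes>\<^sub>M borel :: (real \<times> real) measure"] by (simp add: space_pair_measure)
  from emeasure_G_joint[OF a b this, of mu1 mu2]
  show "emeasure (G_joint mu1 mu2 alpha beta) (space (G_joint mu1 mu2 alpha beta)) = 1"
    using prob_space.emeasure_space_1[OF prob_space_gg_measure[OF a b]] by (simp add: a b)
qed

lemma AE_G_joint_label:
  assumes a: "alpha > 0" and b: "beta > 0"
  shows "AE p in G_joint mu1 mu2 alpha beta. snd p = -1 \<or> snd p = 1"
proof -
  have N: "UNIV \<times> - {-1, 1} \<in> sets (borel \<Otimes>\<^sub>M borel :: (real \<times> real) measure)"
    by (intro pair_measureI) auto
  hence "UNIV \<times> - {-1, 1} \<in> null_sets (G_joint mu1 mu2 alpha beta)"
    using emeasure_G_joint[OF a b N, of mu1 mu2] by (simp add: null_sets_def a b)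
  thus ?thesis by (rule AE_I') auto
qed

lemma integrable_G_joint_abs_fst:
  assumes a: "alpha > 0" and b: "beta > 0"
  shows "integrable (G_joint mu1 mu2 alpha beta) (\<lambda>p. \<bar>fst p - c\<bar>)"
proof (rule integrableI_bounded)
  show "(\<lambda>p. \<bar>fst p - c\<bar>) \<in> borel_measurable (G_joint mu1 mu2 alpha beta)"
    by (rule borel_measurable_G_joint[OF a b]) measurable
  have "(\<integral>\<^sup>+x. ennreal \<bar>x - c\<bar> \<partial>gg_measure mu alpha beta) < \<infinity>" for mu
    using integrable_gg_measure_abs[OF a b, of mu c] by (simp add: integrable_iff_bounded)
  thus "(\<integral>\<^sup>+p. ennreal (norm \<bar>fst p - c\<bar>) \<partial>G_joint mu1 mu2 alpha beta) < \<infinity>"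
    by (subst nn_integral_G_joint[OF a b]) (simp_all add: ennreal_divide_eq_top_iff less_top[symmetric])
qed

lemma integrable_G_joint_dominated:
  assumes a: "alpha > 0" and b: "beta > 0" and f: "f \<in> borel_measurable (borel \<Otimes>\<^sub>M borel)"
    and dom: "AE p in G_joint mu1 mu2 alpha beta. \<bar>f p\<bar> \<le> \<bar>fst p - c\<bar> + K"
  shows "integrable (G_joint mu1 mu2 alpha beta) f"
proof (rule Bochner_Integration.integrable_bound)
  interpret prob_space "G_joint mu1 mu2 alpha beta" using prob_space_G_joint[OF a b] .
  show "integrable (G_joint mu1 mu2 alpha beta) (\<lambda>p. \<bar>fst p - c\<bar> + K)"
    using integrable_G_joint_abs_fst[OF a b] by simp
  show "f \<in> borel_measurable (G_joint mu1 mu2 alpha beta)"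
    by (rule borel_measurable_G_joint[OF a b f])
  show "AE p in G_joint mu1 mu2 alpha beta. norm (f p) \<le> norm (\<bar>fst p - c\<bar> + K)"
    using dom by eventually_elim simp
qed

lemma borel_measurable_clf[measurable]: "clf th \<in> borel_measurable borel"
  unfolding clf_def by measurable

lemma integrable_G_joint_residual:
  assumes a: "alpha > 0" and b: "beta > 0"
  shows "integrable (G_joint mu1 mu2 alpha beta) (\<lambda>p. fst p - snd p + th)"
  by (rule integrable_G_joint_dominated[OF a b, where c="- th" and K=1])
     (measurable, use AE_G_joint_label[OF a b] in \<open>eventually_elim, auto\<close>)

lemma integrable_G_joint_clf_residual:
  assumes a: "alpha > 0" and b: "beta > 0"
  shows "integrable (G_joint mu1 mu2 alpha beta) (\<lambda>p. fst p - clf th (fst p) + th)"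
  by (rule integrable_G_joint_dominated[OF a b, where c="- th" and K=1])
     (measurable, auto simp: clf_def sgn_if)

section \<open>Misclassification loss\<close>

lemma loss_G_joint:
  assumes a: "alpha > 0" and b: "beta > 0"
  shows "loss (G_joint mu1 mu2 alpha beta) th =
     (measure (gg_measure mu1 alpha beta) {- th..} + measure (gg_measure mu2 alpha beta) {..- th}) / 2"
proof -
  interpret G: prob_space "G_joint mu1 mu2 alpha beta" using prob_space_G_joint[OF a b] .
  interpret P1: prob_space "gg_measure mu1 alpha beta" using prob_space_gg_measure[OF a b] .
  interpret P2: prob_space "gg_measure mu2 alpha beta" using prob_space_gg_measure[OF a b] .
  let ?A = "{p::real \<times> real. clf th (fst p) \<noteq> snd p}"
  have "Measurable.pred (borel \<Otimes>\<^sub>M borel) (\<lambda>p::real \<times> real. clf th (fst p) \<noteq> snd p)"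
    by measurable
  hence A: "?A \<in> sets (borel \<Otimes>\<^sub>M borel)" by (simp add: pred_def space_pair_measure)
  have "{x. (x, -1) \<in> ?A} = {- th..}" and "{x. (x, 1) \<in> ?A} = {..- th}"
    by (auto simp: clf_def sgn_if split: if_splits)
  hence "ennreal (loss (G_joint mu1 mu2 alpha beta) th) =
     (ennreal (measure (gg_measure mu1 alpha beta) {- th..}) + ennreal (measure (gg_measure mu2 alpha beta) {..- th})) / 2"
    using emeasure_G_joint[OF a b A, of mu1 mu2]
    by (simp add: loss_def G.emeasure_eq_measure P1.emeasure_eq_measure P2.emeasure_eq_measure)
  also have "\<dots> = ennreal (measure (gg_measure mu1 alpha beta) {- th..} + measure (gg_measure mu2 alpha beta) {..- th})
                  / ennreal 2"
    by (simp add: ennreal_plus[symmetric] del: ennreal_plus)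
  also have "\<dots> = ennreal ((measure (gg_measure mu1 alpha beta) {- th..} + measure (gg_measure mu2 alpha beta) {..- th}) / 2)"
    by (rule divide_ennreal) simp_all
  finally show ?thesis by (simp add: loss_def)
qed

lemma lipschitz_loss_G_joint:
  assumes a: "alpha > 0" and b: "beta > 0"
  shows "(gg_peak alpha beta)-lipschitz_on UNIV (loss (G_joint mu1 mu2 alpha beta))"
proof (rule lipschitz_onI)
  fix th th' :: real
  have "dist (measure (gg_measure mu1 alpha beta) {- th..}) (measure (gg_measure mu1 alpha beta) {- th'..})
      \<le> gg_peak alpha beta * dist th th'"
    using lipschitz_onD[OF lipschitz_gg_measure_atLeast[OF a b], of "- th" "- th'"]
    by (simp add: dist_real_def abs_minus_commute)
  moreover have "dist (measure (gg_measure mu2 alpha beta) {..- th}) (measure (gg_measure mu2 alpha beta) {..- th'})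
      \<le> gg_peak alpha beta * dist th th'"
    using lipschitz_onD[OF lipschitz_gg_measure_atMost[OF a b], of "- th" "- th'"]
    by (simp add: dist_real_def abs_minus_commute)
  ultimately show "dist (loss (G_joint mu1 mu2 alpha beta) th) (loss (G_joint mu1 mu2 alpha beta) th')
      \<le> gg_peak alpha beta * dist th th'"
    unfolding loss_G_joint[OF a b] by (simp add: dist_real_def abs_le_iff field_simps)
qed (use gg_peak_pos[OF a b] in simp)

lemma abs_diff_sgn_le:
  fixes y z :: real
  assumes "y = -1 \<or> y = 1"
  shows "\<bar>z - sgn z\<bar> \<le> \<bar>z - y\<bar>"
  using assms by (auto simp: sgn_if)

lemma integral_abs_clf_residual_less:
  assumes a: "alpha > 0" and b: "beta > 0"
  shows "(\<integral>p. \<bar>fst p - clf th (fst p) + th\<bar> \<partial>G_joint mu1 mu2 alpha beta)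
       < (\<integral>p. \<bar>fst p - snd p + th\<bar> \<partial>G_joint mu1 mu2 alpha beta)"
proof -
  let ?G = "G_joint mu1 mu2 alpha beta"
  define h where "h p = \<bar>fst p - snd p + th\<bar> - \<bar>fst p - clf th (fst p) + th\<bar>" for p :: "real \<times> real"
  define S where "S = {1 - th..} \<times> {-1 :: real}"
  have h_int: "integrable ?G h"
    unfolding h_def by (intro Bochner_Integration.integrable_diff integrable_abs[OF integrable_G_joint_residual[OF a b]]
                              integrable_abs[OF integrable_G_joint_clf_residual[OF a b]])
  have h_nonneg_label: "0 \<le> h p" if "snd p = -1 \<or> snd p = 1" for p
    using abs_diff_sgn_le[OF that, of "fst p + th"] by (simp add: h_def clf_def algebra_simps)
  have h_nonneg: "AE p in ?G. 0 \<le> h p"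
    using AE_G_joint_label[OF a b] by eventually_elim (rule h_nonneg_label)
  have S: "S \<in> sets (borel \<Otimes>\<^sub>M borel)" unfolding S_def by (intro pair_measureI) auto
  have "emeasure ?G S = emeasure (gg_measure mu1 alpha beta) {1 - th..} / 2"
    using emeasure_G_joint[OF a b S, of mu1 mu2] by (simp add: S_def atLeast_def)
  hence S_not_null: "S \<notin> null_sets ?G"
    using emeasure_gg_measure_atLeast_pos[OF a b, of mu1 "1 - th"] by (auto simp: null_sets_def)
  have h_on_S: "h p = 2" if "p \<in> S" for p
    using that by (auto simp: S_def h_def clf_def sgn_if)
  have "\<not> (AE p in ?G. h p = 0)"
  proof
    assume "AE p in ?G. h p = 0"
    hence "AE p in ?G. p \<notin> S" by eventually_elim (use h_on_S in force)
    hence "S \<in> null_sets ?G" using S by (simp add: AE_iff_null_sets a b)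
    with S_not_null show False ..
  qed
  hence "(\<integral>p. h p \<partial>?G) \<noteq> 0"
    using integral_nonneg_eq_0_iff_AE[OF h_int h_nonneg] by simp
  moreover have "(\<integral>p. h p \<partial>?G) \<ge> 0" by (rule integral_nonneg_AE[OF h_nonneg])
  moreover have "(\<integral>p. h p \<partial>?G) = (\<integral>p. \<bar>fst p - snd p + th\<bar> \<partial>?G) - (\<integral>p. \<bar>fst p - clf th (fst p) + th\<bar> \<partial>?G)"
    unfolding h_def by (intro Bochner_Integration.integral_diff integrable_abs[OF integrable_G_joint_residual[OF a b]]
                              integrable_abs[OF integrable_G_joint_clf_residual[OF a b]])
  ultimately show ?thesis by linarith
qed

section \<open>Stochastic gradient descent on relabelled samples\<close>

lemma measurable_sgd_iter:
  assumes "\<And>t. X t \<in> borel_measurable M" and "\<And>t. Y' t \<in> borel_measurable M"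
  shows "sgd_iter eta theta0 X Y' t \<in> borel_measurable M"
proof (induction t)
  case (Suc t)
  have "sgd_iter eta theta0 X Y' (Suc t) =
          (\<lambda>\<omega>. sgd_iter eta theta0 X Y' t \<omega> - eta * (sgd_iter eta theta0 X Y' t \<omega> + X t \<omega> - Y' t \<omega>))"
    by (rule ext) simp
  thus ?case using Suc assms by simp
qed simp

lemma abs_sgd_step_le:
  fixes th eta x y c :: real
  assumes "0 \<le> eta" "eta \<le> 1"
  shows "\<bar>(th - eta * (th + x - y)) - c\<bar> \<le> (1 - eta) * \<bar>th - c\<bar> + eta * \<bar>x - y + c\<bar>"
proof -
  have "(th - eta * (th + x - y)) - c = (1 - eta) * (th - c) - eta * (x - y + c)"
    by (simp add: algebra_simps)
  also have "\<bar>\<dots>\<bar> \<le> \<bar>(1 - eta) * (th - c)\<bar> + \<bar>eta * (x - y + c)\<bar>" by (rule abs_triangle_ineq4)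
  also have "\<dots> = (1 - eta) * \<bar>th - c\<bar> + eta * \<bar>x - y + c\<bar>" using assms by (simp add: abs_mult)
  finally show ?thesis .
qed

lemma integral_abs_sgd_iter_le:
  fixes X Y' :: "nat \<Rightarrow> 'a \<Rightarrow> real"
  assumes M: "prob_space M" and eta: "0 \<le> eta" "eta \<le> 1"
    and X[measurable]: "\<And>t. X t \<in> borel_measurable M" and Y'[measurable]: "\<And>t. Y' t \<in> borel_measurable M"
    and noise_int: "\<And>t. integrable M (\<lambda>\<omega>. \<bar>X t \<omega> - Y' t \<omega> + c\<bar>)"
    and noise_le: "\<And>t. (\<integral>\<omega>. \<bar>X t \<omega> - Y' t \<omega> + c\<bar> \<partial>M) \<le> K"
  shows "integrable M (\<lambda>\<omega>. \<bar>sgd_iter eta theta0 X Y' t \<omega> - c\<bar>) \<and>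
         (\<integral>\<omega>. \<bar>sgd_iter eta theta0 X Y' t \<omega> - c\<bar> \<partial>M) \<le> (1 - eta) ^ t * \<bar>theta0 - c\<bar> + (1 - (1 - eta) ^ t) * K"
proof (induction t)
  case 0
  interpret prob_space M by (rule M)
  show ?case by (simp add: prob_space)
next
  case (Suc t)
  let ?th = "sgd_iter eta theta0 X Y'"
  let ?bound = "\<lambda>\<omega>. (1 - eta) * \<bar>?th t \<omega> - c\<bar> + eta * \<bar>X t \<omega> - Y' t \<omega> + c\<bar>"
  have th_meas[measurable]: "?th s \<in> borel_measurable M" for s
    by (rule measurable_sgd_iter[OF X Y'])
  have bound_int: "integrable M ?bound"
    using Suc.IH noise_int by (intro Bochner_Integration.integrable_add integrable_mult_right) auto
  have step: "\<bar>?th (Suc t) \<omega> - c\<bar> \<le> ?bound \<omega>" for \<omega>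
    using abs_sgd_step_le[OF eta] by simp
  have step_int: "integrable M (\<lambda>\<omega>. \<bar>?th (Suc t) \<omega> - c\<bar>)"
    by (rule Bochner_Integration.integrable_bound[OF bound_int])
       (use step in \<open>auto intro: order_trans[OF _ abs_ge_self]\<close>)
  have "(\<integral>\<omega>. \<bar>?th (Suc t) \<omega> - c\<bar> \<partial>M) \<le> (\<integral>\<omega>. ?bound \<omega> \<partial>M)"
    by (rule integral_mono[OF step_int bound_int step])
  also have "\<dots> = (1 - eta) * (\<integral>\<omega>. \<bar>?th t \<omega> - c\<bar> \<partial>M) + eta * (\<integral>\<omega>. \<bar>X t \<omega> - Y' t \<omega> + c\<bar> \<partial>M)"
    using Suc.IH noise_int by (subst Bochner_Integration.integral_add) auto
  also have "\<dots> \<le> (1 - eta) * ((1 - eta) ^ t * \<bar>theta0 - c\<bar> + (1 - (1 - eta) ^ t) * K) + eta * K"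
    using Suc.IH noise_le eta by (intro add_mono mult_left_mono) auto
  also have "\<dots> = (1 - eta) ^ Suc t * \<bar>theta0 - c\<bar> + (1 - (1 - eta) ^ Suc t) * K"
    by (simp add: algebra_simps)
  finally show ?case using step_int by blast
qed

lemma integral_abs_convex_comb_le:
  fixes f g :: "'a \<Rightarrow> real"
  assumes f: "integrable N f" and g: "integrable N g" and rho: "0 \<le> rho" "rho \<le> 1"
  shows "(\<integral>p. \<bar>rho * f p + (1 - rho) * g p\<bar> \<partial>N) \<le> rho * (\<integral>p. \<bar>f p\<bar> \<partial>N) + (1 - rho) * (\<integral>p. \<bar>g p\<bar> \<partial>N)"
proof -
  have "(\<integral>p. \<bar>rho * f p + (1 - rho) * g p\<bar> \<partial>N) \<le> (\<integral>p. rho * \<bar>f p\<bar> + (1 - rho) * \<bar>g p\<bar> \<partial>N)"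
    using f g rho by (intro integral_mono) (auto intro: order_trans[OF abs_triangle_ineq] simp: abs_mult)
  also have "\<dots> = rho * (\<integral>p. \<bar>f p\<bar> \<partial>N) + (1 - rho) * (\<integral>p. \<bar>g p\<bar> \<partial>N)"
    using f g by (subst Bochner_Integration.integral_add) auto
  finally show ?thesis .
qed

lemma integral_abs_sgd_iter_relabelled_le:
  fixes X Y :: "nat \<Rightarrow> 'a \<Rightarrow> real" and th :: real
  assumes a: "alpha > 0" and b: "beta > 0" and M: "prob_space M"
    and XY[measurable]: "\<And>t. (\<lambda>\<omega>. (X t \<omega>, Y t \<omega>)) \<in> M \<rightarrow>\<^sub>M borel \<Otimes>\<^sub>M borel"
    and distr_XY: "\<And>t. distr M (borel \<Otimes>\<^sub>M borel) (\<lambda>\<omega>. (X t \<omega>, Y t \<omega>)) = G_joint mu1 mu2 alpha beta"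
    and rho: "0 \<le> rho" "rho \<le> 1" and eta: "0 \<le> eta" "eta \<le> 1"
  defines "Y' \<equiv> \<lambda>s \<omega>. rho * clf th (X s \<omega>) + (1 - rho) * Y s \<omega>"
  shows "integrable M (\<lambda>\<omega>. \<bar>sgd_iter eta theta0 X Y' t \<omega> - th\<bar>) \<and>
         (\<integral>\<omega>. \<bar>sgd_iter eta theta0 X Y' t \<omega> - th\<bar> \<partial>M)
           \<le> (1 - eta) ^ t * \<bar>theta0 - th\<bar> + (1 - (1 - eta) ^ t) *
              (rho * (\<integral>p. \<bar>fst p - clf th (fst p) + th\<bar> \<partial>G_joint mu1 mu2 alpha beta)
               + (1 - rho) * (\<integral>p. \<bar>fst p - snd p + th\<bar> \<partial>G_joint mu1 mu2 alpha beta))"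
proof (rule integral_abs_sgd_iter_le[OF M eta])
  let ?G = "G_joint mu1 mu2 alpha beta"
  define w where "w p = \<bar>rho * (fst p - clf th (fst p) + th) + (1 - rho) * (fst p - snd p + th)\<bar>"
    for p :: "real \<times> real"
  have w_meas[measurable]: "w \<in> borel_measurable (borel \<Otimes>\<^sub>M borel)" unfolding w_def by measurable
  have w_int: "integrable ?G w"
    unfolding w_def by (intro integrable_abs Bochner_Integration.integrable_add integrable_mult_right
                              integrable_G_joint_residual[OF a b] integrable_G_joint_clf_residual[OF a b])
  show X[measurable]: "X t \<in> borel_measurable M" for t
    using measurable_compose[OF XY[of t] measurable_fst] by (simp add: comp_def)
  have Y[measurable]: "Y t \<in> borel_measurable M" for t
    using measurable_compose[OF XY[of t] measurable_snd] by (simp add: comp_def)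
  show "Y' t \<in> borel_measurable M" for t unfolding Y'_def by measurable
  have noise_eq: "(\<lambda>\<omega>. \<bar>X t \<omega> - Y' t \<omega> + th\<bar>) = (\<lambda>\<omega>. w (X t \<omega>, Y t \<omega>))" for t
    by (rule ext) (simp add: w_def Y'_def algebra_simps)
  show "integrable M (\<lambda>\<omega>. \<bar>X t \<omega> - Y' t \<omega> + th\<bar>)" for t
    unfolding noise_eq using integrable_distr_eq[OF XY[of t] w_meas] w_int distr_XY[of t] by simp
  show "(\<integral>\<omega>. \<bar>X t \<omega> - Y' t \<omega> + th\<bar> \<partial>M)
      \<le> rho * (\<integral>p. \<bar>fst p - clf th (fst p) + th\<bar> \<partial>?G) + (1 - rho) * (\<integral>p. \<bar>fst p - snd p + th\<bar> \<partial>?G)" for t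
  proof -
    have "(\<integral>\<omega>. \<bar>X t \<omega> - Y' t \<omega> + th\<bar> \<partial>M) = (\<integral>p. w p \<partial>?G)"
      unfolding noise_eq distr_XY[of t, symmetric] by (rule integral_distr[OF XY[of t] w_meas, symmetric])
    thus ?thesis
      unfolding w_def using integral_abs_convex_comb_le[OF integrable_G_joint_clf_residual[OF a b]
                                                         integrable_G_joint_residual[OF a b] rho]
      by simp
  qed
qed

lemma expected_excess_loss_sgd_le:
  fixes X Y :: "nat \<Rightarrow> 'a \<Rightarrow> real" and th :: real
  assumes a: "alpha > 0" and b: "beta > 0" and M: "prob_space M"
    and XY: "\<And>t. (\<lambda>\<omega>. (X t \<omega>, Y t \<omega>)) \<in> M \<rightarrow>\<^sub>M borel \<Otimes>\<^sub>M borel"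
    and distr_XY: "\<And>t. distr M (borel \<Otimes>\<^sub>M borel) (\<lambda>\<omega>. (X t \<omega>, Y t \<omega>)) = G_joint mu1 mu2 alpha beta"
    and rho: "0 \<le> rho" "rho \<le> 1" and eta: "0 \<le> eta" "eta \<le> 1"
  defines "G \<equiv> G_joint mu1 mu2 alpha beta"
    and "Y' \<equiv> \<lambda>s \<omega>. rho * clf th (X s \<omega>) + (1 - rho) * Y s \<omega>"
  shows "(\<integral>\<omega>. loss G (sgd_iter eta theta0 X Y' t \<omega>) \<partial>M) - loss G th
           \<le> gg_peak alpha beta * ((1 - eta) ^ t * \<bar>theta0 - th\<bar> + (1 - (1 - eta) ^ t) *
              (rho * (\<integral>p. \<bar>fst p - clf th (fst p) + th\<bar> \<partial>G) + (1 - rho) * (\<integral>p. \<bar>fst p - snd p + th\<bar> \<partial>G)))"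
proof -
  interpret M: prob_space M by (rule M)
  interpret G: prob_space G unfolding G_def by (rule prob_space_G_joint[OF a b])
  let ?th = "sgd_iter eta theta0 X Y' t"
  have lip: "(gg_peak alpha beta)-lipschitz_on UNIV (loss G)"
    unfolding G_def by (rule lipschitz_loss_G_joint[OF a b])
  have dist_int: "integrable M (\<lambda>\<omega>. \<bar>?th \<omega> - th\<bar>)"
    and dist_le: "(\<integral>\<omega>. \<bar>?th \<omega> - th\<bar> \<partial>M) \<le> (1 - eta) ^ t * \<bar>theta0 - th\<bar> + (1 - (1 - eta) ^ t) *
              (rho * (\<integral>p. \<bar>fst p - clf th (fst p) + th\<bar> \<partial>G) + (1 - rho) * (\<integral>p. \<bar>fst p - snd p + th\<bar> \<partial>G))"
    using integral_abs_sgd_iter_relabelled_le[where X=X and Y=Y, OF a b M XY distr_XY rho eta]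
    unfolding G_def Y'_def by blast+
  have "?th \<in> borel_measurable M"
    using measurable_sgd_iter[of X M Y'] XY unfolding Y'_def by (simp add: measurable_pair_iff)
  hence loss_meas: "(\<lambda>\<omega>. loss G (?th \<omega>)) \<in> borel_measurable M"
    using borel_measurable_continuous_onI[OF lipschitz_on_continuous_on[OF lip]] by measurable
  have loss_int: "integrable M (\<lambda>\<omega>. loss G (?th \<omega>))"
    by (rule Bochner_Integration.integrable_bound[where f="\<lambda>_. 1::real"]) (use loss_meas in \<open>auto simp: loss_def\<close>)
  have "(\<integral>\<omega>. loss G (?th \<omega>) \<partial>M) - loss G th = (\<integral>\<omega>. loss G (?th \<omega>) - loss G th \<partial>M)"
    using loss_int by (simp add: M.prob_space)
  also have "\<dots> \<le> (\<integral>\<omega>. gg_peak alpha beta * \<bar>?th \<omega> - th\<bar> \<partial>M)"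
    using loss_int dist_int lipschitz_onD[OF lip] by (intro integral_mono) (auto simp: dist_real_def abs_le_iff)
  also have "\<dots> \<le> gg_peak alpha beta * ((1 - eta) ^ t * \<bar>theta0 - th\<bar> + (1 - (1 - eta) ^ t) *
              (rho * (\<integral>p. \<bar>fst p - clf th (fst p) + th\<bar> \<partial>G) + (1 - rho) * (\<integral>p. \<bar>fst p - snd p + th\<bar> \<partial>G)))"
    using dist_le gg_peak_pos[OF a b] by simp
  finally show ?thesis .
qed

theorem theorem2:
  fixes mu1 mu2 alpha0 beta0 :: real
  assumes "mu1 < mu2" and "alpha0 > 0" and "beta0 > 0"
  defines "G \<equiv> G_joint mu1 mu2 alpha0 beta0"
    and "ths \<equiv> - (mu1 + mu2) / 2"
  defines "eps0 \<equiv> (\<integral>p. \<bar>fst p - snd p + ths\<bar> \<partial>G) - (\<integral>p. \<bar>fst p - clf ths (fst p) + ths\<bar> \<partial>G)"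
  shows "\<exists>C1>0.
     (\<forall>theta. loss G theta - loss G ths \<le> C1 * \<bar>theta - ths\<bar>)
   \<and> eps0 > 0
   \<and> C1 * eps0 > 0
   \<and> (\<forall>rho theta0 eta (M :: 'a measure) X Y.
        0 \<le> rho \<and> rho \<le> 1 \<and> 0 < eta \<and> eta < 1 \<and> prob_space M
        \<and> prob_space.indep_vars M (\<lambda>_. borel \<Otimes>\<^sub>M borel) (\<lambda>t \<omega>. (X t \<omega>, Y t \<omega>)) UNIV
        \<and> (\<forall>t. distr M (borel \<Otimes>\<^sub>M borel) (\<lambda>\<omega>. (X t \<omega>, Y t \<omega>)) = G)
        \<longrightarrow> (\<forall>t::nat.
              (\<integral>\<omega>. loss G (sgd_iter eta theta0 X
                     (\<lambda>s \<omega>. rho * clf ths (X s \<omega>) + (1 - rho) * Y s \<omega>) t \<omega>) \<partial>M)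
              - loss G ths
              \<le> C1 * \<bar>theta0 - ths\<bar> * (1 - eta) ^ t
                 + (1 - (1 - eta) ^ t)
                   * (C1 * (\<integral>p. \<bar>fst p - snd p + ths\<bar> \<partial>G) - C1 * eps0 * rho)))
   \<and> (\<forall>theta0 eta t rho1 rho2. 0 < eta \<and> eta < 1 \<and> t \<ge> (1::nat)
        \<and> 0 \<le> rho1 \<and> rho1 < rho2 \<and> rho2 \<le> 1 \<longrightarrow>
        C1 * \<bar>theta0 - ths\<bar> * (1 - eta) ^ t
          + (1 - (1 - eta) ^ t) * (C1 * (\<integral>p. \<bar>fst p - snd p + ths\<bar> \<partial>G) - C1 * eps0 * rho2)
        < C1 * \<bar>theta0 - ths\<bar> * (1 - eta) ^ t
          + (1 - (1 - eta) ^ t) * (C1 * (\<integral>p. \<bar>fst p - snd p + ths\<bar> \<partial>G) - C1 * eps0 * rho1))"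
proof -
  have a: "alpha0 > 0" and b: "beta0 > 0" by fact+
  define C1 where "C1 = gg_peak alpha0 beta0"
  define A where "A = (\<integral>p. \<bar>fst p - snd p + ths\<bar> \<partial>G)"
  have C1: "C1 > 0" unfolding C1_def by (rule gg_peak_pos[OF a b])
  have eps0: "eps0 > 0" and eps0_eq: "eps0 = A - (\<integral>p. \<bar>fst p - clf ths (fst p) + ths\<bar> \<partial>G)"
    using integral_abs_clf_residual_less[OF a b] unfolding eps0_def A_def G_def by auto
  have lip: "loss G theta - loss G ths \<le> C1 * \<bar>theta - ths\<bar>" for theta
    using lipschitz_onD[OF lipschitz_loss_G_joint[OF a b], of theta ths]
    unfolding G_def C1_def by (simp add: dist_real_def abs_le_iff)
  have sgd: "(\<integral>\<omega>. loss G (sgd_iter eta theta0 X (\<lambda>s \<omega>. rho * clf ths (X s \<omega>) + (1 - rho) * Y s \<omega>) t \<omega>) \<partial>M)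
      - loss G ths \<le> C1 * \<bar>theta0 - ths\<bar> * (1 - eta) ^ t + (1 - (1 - eta) ^ t) * (C1 * A - C1 * eps0 * rho)"
    if rho: "0 \<le> rho" "rho \<le> 1" and eta: "0 < eta" "eta < 1" and M: "prob_space M"
      and indep: "prob_space.indep_vars M (\<lambda>_. borel \<Otimes>\<^sub>M borel) (\<lambda>t \<omega>. (X t \<omega>, Y t \<omega>)) UNIV"
      and distr_XY: "\<forall>t. distr M (borel \<Otimes>\<^sub>M borel) (\<lambda>\<omega>. (X t \<omega>, Y t \<omega>)) = G"
    for rho theta0 eta and M :: "'a measure" and X Y t
  proof -
    have XY: "(\<lambda>\<omega>. (X s \<omega>, Y s \<omega>)) \<in> M \<rightarrow>\<^sub>M borel \<Otimes>\<^sub>M borel" for s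
      using indep unfolding prob_space.indep_vars_def[OF M] by auto
    have "(\<integral>\<omega>. loss G (sgd_iter eta theta0 X (\<lambda>s \<omega>. rho * clf ths (X s \<omega>) + (1 - rho) * Y s \<omega>) t \<omega>) \<partial>M)
      - loss G ths \<le> C1 * ((1 - eta) ^ t * \<bar>theta0 - ths\<bar> + (1 - (1 - eta) ^ t) *
              (rho * (\<integral>p. \<bar>fst p - clf ths (fst p) + ths\<bar> \<partial>G) + (1 - rho) * A))"
      using expected_excess_loss_sgd_le[where X=X and Y=Y and th=ths, OF a b M XY]
            distr_XY rho eta unfolding G_def C1_def A_def by simp
    also have "\<dots> = C1 * \<bar>theta0 - ths\<bar> * (1 - eta) ^ t + (1 - (1 - eta) ^ t) * (C1 * A - C1 * eps0 * rho)"
      unfolding eps0_eq by (simp add: algebra_simps)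
    finally show ?thesis .
  qed
  have decreasing: "(1 - (1 - eta) ^ t) * (C1 * A - C1 * eps0 * rho2) < (1 - (1 - eta) ^ t) * (C1 * A - C1 * eps0 * rho1)"
    if "0 < eta" "eta < 1" "t \<ge> 1" "rho1 < rho2" for eta rho1 rho2 and t :: nat
    using that C1 eps0 power_strict_decreasing[of 0 t "1 - eta"] by simp
  show ?thesis
    using C1 eps0 lip sgd decreasing unfolding A_def by (auto intro!: exI[of _ C1])
qed

end
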